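(* Let $f:\mathbb{N}^*\to\mathbb{N}^*$ and let $G$ be an $n$-vertex median graph in $\mathcal{U}_f$ with $f(n)\ge 2$. Then there exists a unique vertex $v_0$ of $G$ such that, for every $\Theta$-class $E_i$ of $G$, $v_0$ belongs to the majority halfspace of $E_i$ (the halfspace of strictly larger cardinality).
   Context: Graphs are finite, simple, connected and undirected; a graph is median if for every triple $x,y,z$ of vertices, $I(x,y)\cap I(y,z)\cap I(z,x)$ is a single vertex, where $I(u,v)=\{x: d(u,x)+d(x,v)=d(u,v)\}$. Two edges $uv$, $xy$ are in relation $\Theta_0$ if $u,v,y,x$ form a 4-cycle in which $uv$ and $xy$ are opposite; $\Theta$ is the reflexive–transitive closure of $\Theta_0$ and its classes are the $\Theta$-classes. In a median graph, deleting a $\Theta$-class $E_i$ leaves exactly two connected components with vertex sets $H_i',H_i''$ (the halfspaces). Given $f:\mathbb{N}^*\to\mathbb{N}^*$, a $\Theta$-class $E_i$ of a graph with $n$ vertices is $f$-balanced if $\min\{|H_i'|,|H_i''|\}\ge n/f(n)$, and $f$-unbalanced otherwise. $\mathcal{U}_f$ is the family of median graphs all of whose $\Theta$-classes are $f$-unbalanced. *)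

theory Defs
  imports Complex_Main
begin

definition graph :: "'a set \<Rightarrow> ('a \<Rightarrow> 'a \<Rightarrow> bool) \<Rightarrow> bool" where
  "graph V adj \<longleftrightarrow> finite V \<and> V \<noteq> {} \<and>
     (\<forall>x y. adj x y \<longrightarrow> x \<in> V \<and> y \<in> V) \<and>
     (\<forall>x y. adj x y \<longrightarrow> adj y x) \<and> (\<forall>x. \<not> adj x x) \<and>
     (\<forall>x\<in>V. \<forall>y\<in>V. adj\<^sup>*\<^sup>* x y)"

definition gdist :: "('a \<Rightarrow> 'a \<Rightarrow> bool) \<Rightarrow> 'a \<Rightarrow> 'a \<Rightarrow> nat" where
  "gdist adj u v = (LEAST k. (adj ^^ k) u v)"

definition interval :: "'a set \<Rightarrow> ('a \<Rightarrow> 'a \<Rightarrow> bool) \<Rightarrow> 'a \<Rightarrow> 'a \<Rightarrow> 'a set" where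
  "interval V adj u v = {x\<in>V. gdist adj u x + gdist adj x v = gdist adj u v}"

definition median_graph :: "'a set \<Rightarrow> ('a \<Rightarrow> 'a \<Rightarrow> bool) \<Rightarrow> bool" where
  "median_graph V adj \<longleftrightarrow> graph V adj \<and>
     (\<forall>x\<in>V. \<forall>y\<in>V. \<forall>z\<in>V.
        (\<exists>!m. m \<in> interval V adj x y \<inter> interval V adj y z \<inter> interval V adj z x))"

definition edges :: "('a \<Rightarrow> 'a \<Rightarrow> bool) \<Rightarrow> 'a set set" where
  "edges adj = {{u, v} | u v. adj u v}"

definition theta0 :: "('a \<Rightarrow> 'a \<Rightarrow> bool) \<Rightarrow> ('a set \<times> 'a set) set" where
  "theta0 adj = {({u, v}, {x, y}) | u v x y.
      adj u v \<and> adj v y \<and> adj y x \<and> adj x u \<and>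
      u \<noteq> y \<and> v \<noteq> x}"

definition theta :: "('a \<Rightarrow> 'a \<Rightarrow> bool) \<Rightarrow> ('a set \<times> 'a set) set" where
  "theta adj = (theta0 adj)\<^sup>*"

definition theta_classes :: "('a \<Rightarrow> 'a \<Rightarrow> bool) \<Rightarrow> 'a set set set" where
  "theta_classes adj = edges adj // theta adj"

definition del_edges :: "('a \<Rightarrow> 'a \<Rightarrow> bool) \<Rightarrow> 'a set set \<Rightarrow> 'a \<Rightarrow> 'a \<Rightarrow> bool" where
  "del_edges adj C x y \<longleftrightarrow> adj x y \<and> {x, y} \<notin> C"

definition component :: "'a set \<Rightarrow> ('a \<Rightarrow> 'a \<Rightarrow> bool) \<Rightarrow> 'a \<Rightarrow> 'a set" where
  "component V adj x = {y\<in>V. adj\<^sup>*\<^sup>* x y}"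

definition components :: "'a set \<Rightarrow> ('a \<Rightarrow> 'a \<Rightarrow> bool) \<Rightarrow> 'a set set" where
  "components V adj = component V adj ` V"

definition halfspaces :: "'a set \<Rightarrow> ('a \<Rightarrow> 'a \<Rightarrow> bool) \<Rightarrow> 'a set set \<Rightarrow> 'a set set" where
  "halfspaces V adj C = components V (del_edges adj C)"

definition f_balanced :: "(nat \<Rightarrow> nat) \<Rightarrow> 'a set \<Rightarrow> ('a \<Rightarrow> 'a \<Rightarrow> bool) \<Rightarrow> 'a set set \<Rightarrow> bool" where
  "f_balanced f V adj C \<longleftrightarrow>
     real (Min (card ` halfspaces V adj C)) \<ge> real (card V) / real (f (card V))"

definition in_U :: "(nat \<Rightarrow> nat) \<Rightarrow> 'a set \<Rightarrow> ('a \<Rightarrow> 'a \<Rightarrow> bool) \<Rightarrow> bool" where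
  "in_U f V adj \<longleftrightarrow> median_graph V adj \<and>
     (\<forall>C\<in>theta_classes adj. \<not> f_balanced f V adj C)"

definition in_majority_halfspace :: "'a set \<Rightarrow> ('a \<Rightarrow> 'a \<Rightarrow> bool) \<Rightarrow> 'a set set \<Rightarrow> 'a \<Rightarrow> bool" where
  "in_majority_halfspace V adj C v \<longleftrightarrow>
     (\<forall>H\<in>halfspaces V adj C. H \<noteq> component V (del_edges adj C) v \<longrightarrow>
        card H < card (component V (del_edges adj C) v))"

end

theory Submission
  imports Defs
begin

text \<open>
  In a median graph every \<open>\<Theta>\<close>-class is the set of edges between \<open>W\<^sub>a\<^sub>b\<close> (the vertices closer
  to \<open>a\<close> than to \<open>b\<close>) and \<open>W\<^sub>b\<^sub>a\<close>, for any edge \<open>ab\<close> of the class, and these two sets are its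
  halfspaces. They are convex, and convex sets of a median graph have the Helly property: three
  pairwise intersecting ones share the median of three witnesses. If \<open>f(n) \<ge> 2\<close> and every class
  is \<open>f\<close>-unbalanced, each class has a halfspace with more than \<open>n/2\<close> vertices; any two of these
  majority halfspaces meet, so all of them have a common vertex. Two distinct such vertices \<open>u, v\<close>
  are impossible: the class of the first edge of a shortest \<open>u\<close>-\<open>v\<close> path puts them into opposite
  halfspaces.
\<close>

lemma majorities_intersect:
  assumes "finite V" "A \<subseteq> V" "B \<subseteq> V" "card V < 2 * card A" "card V < 2 * card B"
  shows "A \<inter> B \<noteq> {}"
proof
  assume "A \<inter> B = {}"
  then have "card A + card B = card (A \<union> B)"
    using assms(1-3) by (metis card_Un_disjoint finite_subset)
  also have "\<dots> \<le> card V"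
    using assms(1-3) by (simp add: card_mono)
  finally show False
    using assms(4,5) by linarith
qed

lemma unbalanced_imp_minority:
  assumes "f n \<ge> 2" and "\<not> real m \<ge> real n / real (f n)"
  shows "2 * m < n"
proof -
  have "real n / real (f n) \<le> real n / 2"
    using assms(1) by (intro divide_left_mono) auto
  then show ?thesis
    using assms(2) by linarith
qed


locale fin_graph =
  fixes V :: "'a set" and adj :: "'a \<Rightarrow> 'a \<Rightarrow> bool"
  assumes graph: "graph V adj"
begin

abbreviation d :: "'a \<Rightarrow> 'a \<Rightarrow> nat" where "d \<equiv> gdist adj"
abbreviation I :: "'a \<Rightarrow> 'a \<Rightarrow> 'a set" where "I \<equiv> interval V adj"

lemma finite_V: "finite V"
  and V_nonempty: "V \<noteq> {}"
  and adj_in_V: "adj x y \<Longrightarrow> x \<in> V \<and> y \<in> V"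
  and adj_sym: "adj x y \<Longrightarrow> adj y x"
  and adj_irrefl: "\<not> adj x x"
  and reachable: "x \<in> V \<Longrightarrow> y \<in> V \<Longrightarrow> adj\<^sup>*\<^sup>* x y"
  using graph unfolding graph_def by blast+

lemma gdist_walk: "x \<in> V \<Longrightarrow> y \<in> V \<Longrightarrow> (adj ^^ d x y) x y"
  unfolding gdist_def by (rule LeastI_ex) (meson reachable rtranclp_power)

lemma gdist_le_walk: "(adj ^^ k) x y \<Longrightarrow> d x y \<le> k"
  unfolding gdist_def by (rule Least_le)

lemma gdist_triangle:
  assumes "x \<in> V" "y \<in> V" "z \<in> V"
  shows "d x z \<le> d x y + d y z"
proof -
  have "(adj ^^ (d x y + d y z)) x z"
    using gdist_walk assms by (auto simp: relpowp_add)
  then show ?thesis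
    by (rule gdist_le_walk)
qed

lemma walk_sym: "(adj ^^ k) x y \<Longrightarrow> (adj ^^ k) y x"
proof (induction k arbitrary: x y)
  case 0
  then show ?case by auto
next
  case (Suc k)
  then obtain w where "adj x w" "(adj ^^ k) w y"
    using relpowp_Suc_D2 by metis
  then show ?case
    using Suc.IH adj_sym relpowp_Suc_I by metis
qed

lemma gdist_sym: "d x y = d y x"
  unfolding gdist_def using walk_sym by metis

lemma gdist_self [simp]: "d x x = 0"
  using gdist_le_walk[OF relpowp_0_I] by simp

lemma gdist_eq_0_imp_eq: "d x y = 0 \<Longrightarrow> x \<in> V \<Longrightarrow> y \<in> V \<Longrightarrow> x = y"
  using gdist_walk by fastforce

lemma gdist_adj: "adj x y \<Longrightarrow> d x y = 1"
proof -
  assume xy: "adj x y"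
  then have "(adj ^^ 1) x y"
    by (simp only: relpowp_1)
  then have "d x y \<le> 1"
    by (rule gdist_le_walk)
  moreover have "d x y \<noteq> 0"
    using gdist_eq_0_imp_eq xy adj_irrefl adj_in_V by metis
  ultimately show ?thesis by simp
qed

lemma gdist_eq_1_imp_adj: "d x y = 1 \<Longrightarrow> x \<in> V \<Longrightarrow> y \<in> V \<Longrightarrow> adj x y"
  using gdist_walk by fastforce

lemma gdist_Suc_imp_neighbour:
  assumes "x \<in> V" "y \<in> V" "d x y = Suc k"
  obtains w where "adj x w" "d w y = k"
proof -
  obtain w where w: "adj x w" "(adj ^^ k) w y"
    using assms gdist_walk relpowp_Suc_D2 by metis
  have "d x y \<le> d x w + d w y"
    using gdist_triangle assms w adj_in_V by blast
  moreover have "d w y \<le> k"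
    using w gdist_le_walk by blast
  ultimately show thesis
    using that w gdist_adj assms by force
qed

lemma gdist_adj_le: "adj x y \<Longrightarrow> z \<in> V \<Longrightarrow> d x z \<le> Suc (d y z)"
  using gdist_triangle[of x y z] gdist_adj adj_in_V by force

lemma in_interval_iff: "w \<in> I x y \<longleftrightarrow> w \<in> V \<and> d x w + d w y = d x y"
  unfolding interval_def by blast

lemma interval_sym: "w \<in> I x y \<longleftrightarrow> w \<in> I y x"
  unfolding in_interval_iff using gdist_sym by (metis add.commute)

lemma interval_trans:
  assumes "y \<in> I x z" "w \<in> I x y" "x \<in> V" "z \<in> V"
  shows "w \<in> I x z"
proof -
  have "y \<in> V" "w \<in> V"
    using assms(1,2) in_interval_iff by auto
  then have "d w z \<le> d w y + d y z" "d x z \<le> d x w + d w z"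
    using gdist_triangle assms(3,4) by blast+
  then show ?thesis
    using assms(1,2) \<open>w \<in> V\<close> in_interval_iff by simp
qed

end


locale median =
  fixes V :: "'a set" and adj :: "'a \<Rightarrow> 'a \<Rightarrow> bool"
  assumes is_median: "median_graph V adj"

sublocale median \<subseteq> fin_graph
  using is_median by unfold_locales (simp add: median_graph_def)

context median
begin

definition median_of :: "'a \<Rightarrow> 'a \<Rightarrow> 'a \<Rightarrow> 'a" where
  "median_of x y z = (THE m. m \<in> I x y \<inter> I y z \<inter> I z x)"

lemma median_ex1: "x \<in> V \<Longrightarrow> y \<in> V \<Longrightarrow> z \<in> V \<Longrightarrow> \<exists>!m. m \<in> I x y \<inter> I y z \<inter> I z x"
  using is_median unfolding median_graph_def by blast

lemma median_of_in_intervals: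
  "x \<in> V \<Longrightarrow> y \<in> V \<Longrightarrow> z \<in> V \<Longrightarrow> median_of x y z \<in> I x y \<inter> I y z \<inter> I z x"
  unfolding median_of_def using median_ex1 theI' by metis

lemma median_of_unique:
  "x \<in> V \<Longrightarrow> y \<in> V \<Longrightarrow> z \<in> V \<Longrightarrow> m \<in> I x y \<inter> I y z \<inter> I z x \<Longrightarrow> m = median_of x y z"
  using median_of_in_intervals median_ex1 by metis

text \<open>Bipartiteness: the median of \<open>a, b, x\<close> is \<open>a\<close> or \<open>b\<close>.\<close>

lemma adj_gdist_neq: "adj a b \<Longrightarrow> x \<in> V \<Longrightarrow> d a x \<noteq> d b x"
proof
  assume ab: "adj a b" and x: "x \<in> V" and eq: "d a x = d b x"
  have V: "a \<in> V" "b \<in> V"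
    using ab adj_in_V by auto
  obtain m where m: "m \<in> I a b" "m \<in> I b x" "m \<in> I x a"
    using median_ex1[OF V x] by blast
  have "d a m + d m b = 1"
    using m(1) gdist_adj[OF ab] in_interval_iff by simp
  then have "d a m = 0 \<or> d m b = 0"
    by arith
  then have "m = a \<or> m = b"
    using gdist_eq_0_imp_eq m(1) V in_interval_iff by metis
  then show False
    using m(2,3) in_interval_iff gdist_adj[OF ab] gdist_sym eq by auto
qed

lemma interval_Int_subset_interval_median:
  assumes V: "x \<in> V" "y \<in> V" "z \<in> V"
    and m: "m \<in> I x y" "m \<in> I y z" "m \<in> I z x"
    and w: "w \<in> I x y" "w \<in> I x z"
  shows "w \<in> I x m"
proof -
  have wV: "w \<in> V"
    using w in_interval_iff by auto
  define m' where "m' = median_of w y z"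
  have m': "m' \<in> I w y" "m' \<in> I y z" "m' \<in> I z w"
    using median_of_in_intervals[OF wV V(2,3)] m'_def by auto
  have m'V: "m' \<in> V"
    using m' in_interval_iff by auto
  have tri: "d x m' \<le> d x w + d w m'" "d x y \<le> d x m' + d m' y" "d x z \<le> d x m' + d m' z"
    using gdist_triangle V wV m'V by blast+
  have "m' \<in> I x y"
    using tri m'(1) w(1) in_interval_iff m'V by simp
  moreover have "m' \<in> I x z"
    using tri m'(3) w(2) in_interval_iff m'V gdist_sym by (simp add: add.commute)
  ultimately have "m' = m"
    using median_of_unique[OF V] m'(2) m interval_sym by blast
  then have "d x y = d x w + d w m + d m y"
    using m'(1) w(1) in_interval_iff by simp
  moreover have "d x m \<le> d x w + d w m"
    using gdist_triangle V wV m in_interval_iff by blast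
  ultimately show ?thesis
    using m(1) in_interval_iff wV by simp
qed

lemma gdist_2_if_path:
  assumes "adj u v" "adj v y" "u \<noteq> y"
  shows "d u y = 2" "v \<in> I u y"
proof -
  have V: "u \<in> V" "v \<in> V" "y \<in> V"
    using assms adj_in_V by auto
  have "d u y \<le> 2"
    using gdist_triangle[OF V] gdist_adj assms by simp
  moreover have "d u y \<noteq> 0"
    using gdist_eq_0_imp_eq V assms by blast
  moreover have "d u y \<noteq> 1"
    using gdist_eq_1_imp_adj adj_gdist_neq V assms gdist_adj gdist_sym by metis
  ultimately show "d u y = 2"
    by linarith
  then show "v \<in> I u y"
    using gdist_adj assms V in_interval_iff by simp
qed

lemma quadrangle:
  assumes "u \<in> V" "v \<noteq> w" "adj v x" "adj w x" "d u v = d u w"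
  obtains m where "adj v m" "adj w m" "Suc (d u m) = d u v"
proof -
  have V: "v \<in> V" "w \<in> V"
    using assms adj_in_V by auto
  define m where "m = median_of u v w"
  have m: "m \<in> I u v" "m \<in> I v w" "m \<in> I w u"
    using median_of_in_intervals[OF assms(1) V] m_def by auto
  have "d v w = 2"
    using gdist_2_if_path[of v x w] assms adj_sym by blast
  then have e: "d u m + d m v = d u v" "d v m + d m w = 2" "d w m + d m u = d w u"
    using m in_interval_iff by auto
  moreover have "d m v = d m w"
    using e assms(5) gdist_sym[of m u] gdist_sym[of w u] gdist_sym[of m w] by linarith
  ultimately have "d v m = 1" "d w m = 1" "Suc (d u m) = d u v"
    using gdist_sym[of v m] gdist_sym[of w m] by linarith+
  moreover have "m \<in> V"
    using m in_interval_iff by auto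
  ultimately show thesis
    using that gdist_eq_1_imp_adj V by blast
qed


definition W :: "'a \<Rightarrow> 'a \<Rightarrow> 'a set" where
  "W a b = {x \<in> V. d a x < d b x}"

lemma W_in_V: "x \<in> W a b \<Longrightarrow> x \<in> V"
  unfolding W_def by blast

lemma gdist_W_Suc: "adj a b \<Longrightarrow> x \<in> W a b \<Longrightarrow> d b x = Suc (d a x)"
  unfolding W_def using gdist_adj_le[of b a x] adj_sym by force

lemma in_W_or_W_swap: "adj a b \<Longrightarrow> x \<in> V \<Longrightarrow> x \<in> W a b \<or> x \<in> W b a"
  unfolding W_def using adj_gdist_neq by fastforce

lemma W_swap_disjoint: "x \<in> W a b \<Longrightarrow> x \<notin> W b a"
  unfolding W_def by auto

lemma in_W_self: "adj a b \<Longrightarrow> a \<in> W a b"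
  unfolding W_def using gdist_adj adj_in_V gdist_sym by fastforce

lemma W_Un_W_swap: "adj a b \<Longrightarrow> W a b \<union> W b a = V"
  using in_W_or_W_swap W_in_V by blast

lemma card_W_add_card_W_swap:
  assumes "adj a b"
  shows "card (W a b) + card (W b a) = card V"
proof -
  have "finite (W a b)" "finite (W b a)"
    using finite_V W_in_V by (meson finite_subset subsetI)+
  then show ?thesis
    using card_Un_disjoint W_Un_W_swap[OF assms] W_swap_disjoint by (metis disjoint_iff)
qed

lemma W_neq_W_swap: "adj a b \<Longrightarrow> W b a \<noteq> W a b"
  using in_W_self W_swap_disjoint by blast

lemma interval_to_base_subset_W:
  assumes ab: "adj a b" and u: "u \<in> W a b" and w: "w \<in> I u a"
  shows "w \<in> W a b"
proof -
  have V: "a \<in> V" "b \<in> V" "u \<in> V" "w \<in> V"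
    using ab adj_in_V u W_in_V w in_interval_iff by auto
  have "d u w + d w a = d u a" "d b u = Suc (d a u)" "d u b \<le> d u w + d w b"
    using w in_interval_iff gdist_W_Suc[OF ab u] gdist_triangle V by auto
  then have "d a w < d b w"
    using gdist_sym[of a w] gdist_sym[of b w] gdist_sym[of u a] gdist_sym[of u b] by linarith
  then show ?thesis
    unfolding W_def using V by blast
qed

text \<open>
  The induction step of the convexity of \<open>W\<^sub>a\<^sub>b\<close>: if a geodesic from \<open>x\<close> to \<open>y\<close> leaves \<open>W\<^sub>a\<^sub>b\<close>
  at its first edge \<open>xx'\<close>, then \<open>x'\<close> also lies on a geodesic from \<open>x\<close> to a nearer vertex of
  \<open>W\<^sub>a\<^sub>b\<close>, namely the median of \<open>x, y, a\<close>.
\<close>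

lemma geodesic_leaving_W_shortcut:
  assumes ab: "adj a b" and x: "x \<in> W a b" and y: "y \<in> W a b"
    and x': "adj x x'" "x' \<in> W b a" "x' \<in> I x y"
  obtains m where "m \<in> W a b" "x' \<in> I x m" "d x m < d x y"
proof -
  have V: "a \<in> V" "b \<in> V" "x \<in> V" "y \<in> V" "x' \<in> V"
    using ab x y x' adj_in_V W_in_V by auto
  have dist: "d b x = Suc (d a x)" "d b y = Suc (d a y)" "d a x' = Suc (d b x')"
    using gdist_W_Suc ab adj_sym x y x' by blast+
  have "d a x' \<le> Suc (d a x)" "d x b \<le> Suc (d x' b)"
    using gdist_adj_le adj_sym x' V gdist_sym by metis+
  then have x'_xb: "x' \<in> I x b"
    using dist(1,3) gdist_adj[OF x'(1)] V in_interval_iff gdist_sym by simp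
  have a_xb: "a \<in> I x b" and a_yb: "a \<in> I y b"
    using dist(1,2) gdist_adj[OF ab] V in_interval_iff gdist_sym[of x a] gdist_sym[of x b]
      gdist_sym[of y a] gdist_sym[of y b] by simp_all
  define m where "m = median_of x y a"
  have m: "m \<in> I x y" "m \<in> I y a" "m \<in> I a x"
    using median_of_in_intervals[OF V(3,4,1)] m_def by auto
  have "m \<in> I x b" "m \<in> I y b"
    using interval_trans[OF a_xb] interval_trans[OF a_yb] m interval_sym V by blast+
  then have x'_xm: "x' \<in> I x m"
    using interval_Int_subset_interval_median[OF V(3,4,2) m(1)] x'(3) x'_xb interval_sym by blast
  have m_W: "m \<in> W a b"
    using interval_to_base_subset_W[OF ab x] m(3) interval_sym by blast
  have "m \<noteq> y"
  proof
    assume "m = y"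
    then have "x' \<in> I x a"
      using interval_trans[of y x a x'] m(3) interval_sym x'(3) V by blast
    then show False
      using interval_to_base_subset_W[OF ab x] x'(2) W_swap_disjoint by blast
  qed
  then have "d m y \<noteq> 0"
    using gdist_eq_0_imp_eq m(1) in_interval_iff V(4) by blast
  then have "d x m < d x y"
    using m(1) in_interval_iff by simp
  then show thesis
    using that m_W x'_xm by blast
qed

lemma W_convex:
  assumes "adj a b" "x \<in> W a b" "y \<in> W a b" "z \<in> I x y"
  shows "z \<in> W a b"
  using assms(2-4)
proof (induction "d x y" arbitrary: x y z rule: less_induct)
  case less
  have V: "x \<in> V" "y \<in> V" "z \<in> V"
    using less.prems W_in_V in_interval_iff by auto
  show ?case
  proof (cases "z = x")
    case True
    then show ?thesis using less.prems by simp
  next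
    case False
    then obtain j where j: "d x z = Suc j"
      using gdist_eq_0_imp_eq V not0_implies_Suc by metis
    then obtain x' where x': "adj x x'" "d x' z = j"
      using gdist_Suc_imp_neighbour V by metis
    have x'V: "x' \<in> V"
      using x' adj_in_V by auto
    have "d x z + d z y = d x y" "d x' y \<le> d x' z + d z y" "d x y \<le> d x x' + d x' y"
      using less.prems(3) in_interval_iff gdist_triangle x'V V by auto
    then have x'_xy: "x' \<in> I x y" and z_x'y: "z \<in> I x' y" and closer: "d x' y < d x y"
      using gdist_adj[OF x'(1)] j x' x'V V in_interval_iff by simp_all
    have "x' \<in> W a b"
    proof (rule ccontr)
      assume "x' \<notin> W a b"
      then have "x' \<in> W b a"
        using in_W_or_W_swap assms(1) x'V by blast
      then obtain m where "m \<in> W a b" "x' \<in> I x m" "d x m < d x y"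
        using geodesic_leaving_W_shortcut assms(1) less.prems(1,2) x'(1) x'_xy by blast
      then show False
        using less.hyps less.prems(1) \<open>x' \<notin> W a b\<close> by blast
    qed
    then show ?thesis
      using less.hyps[OF closer] less.prems(2) z_x'y by blast
  qed
qed


definition cut_edges :: "'a \<Rightarrow> 'a \<Rightarrow> 'a set set" where
  "cut_edges a b = {{x, y} | x y. adj x y \<and> x \<in> W a b \<and> y \<in> W b a}"

lemma cut_edgesI: "adj x y \<Longrightarrow> x \<in> W a b \<Longrightarrow> y \<in> W b a \<Longrightarrow> {x, y} \<in> cut_edges a b"
  unfolding cut_edges_def by blast

lemma cut_edgesE:
  assumes "e \<in> cut_edges a b"
  obtains x y where "e = {x, y}" "adj x y" "x \<in> W a b" "y \<in> W b a"
  using assms unfolding cut_edges_def by blast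

lemma cut_edges_swap: "cut_edges a b = cut_edges b a"
  unfolding cut_edges_def using adj_sym by (blast intro: insert_commute)

lemma cut_edge_sides:
  assumes "{x, y} \<in> cut_edges a b"
  shows "(x \<in> W a b \<and> y \<in> W b a) \<or> (x \<in> W b a \<and> y \<in> W a b)"
  using assms by (elim cut_edgesE) (auto simp: doubleton_eq_iff)

lemma square_opposite_edge_sides:
  assumes pq: "adj p q" and sq: "adj u v" "adj v y" "adj y x" "adj x u" "u \<noteq> y" "v \<noteq> x"
    and uv: "u \<in> W p q" "v \<in> W q p"
  shows "x \<in> W p q" "y \<in> W q p"
proof -
  have V: "x \<in> V" "y \<in> V"
    using sq adj_in_V by auto
  have "v \<in> I u y" "u \<in> I v x"
    using gdist_2_if_path sq adj_sym by blast+
  then show "x \<in> W p q" "y \<in> W q p"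
    using W_convex[OF pq uv(1)] W_convex[OF adj_sym[OF pq] uv(2)] in_W_or_W_swap[OF pq] V
      W_swap_disjoint uv by blast+
qed

lemma theta0_preserves_cut_edges:
  assumes ab: "adj a b" and t: "(e, e') \<in> theta0 adj" and e: "e \<in> cut_edges a b"
  shows "e' \<in> cut_edges a b"
proof -
  obtain u v x y where uv: "e = {u, v}" "e' = {x, y}"
    and sq: "adj u v" "adj v y" "adj y x" "adj x u" "u \<noteq> y" "v \<noteq> x"
    using t unfolding theta0_def by blast
  have "\<And>p q. adj p q \<Longrightarrow> u \<in> W p q \<Longrightarrow> v \<in> W q p \<Longrightarrow> {x, y} \<in> cut_edges p q"
    using square_opposite_edge_sides[OF _ sq] cut_edgesI adj_sym sq(3) by blast
  then show ?thesis
    using cut_edge_sides[OF e[unfolded uv]] ab adj_sym cut_edges_swap uv(2) by metis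
qed

lemma theta_preserves_cut_edges:
  assumes "adj a b" "(e, e') \<in> theta adj" "e \<in> cut_edges a b"
  shows "e' \<in> cut_edges a b"
  using assms(2,3) unfolding theta_def
  by (induction rule: rtrancl_induct) (auto intro: theta0_preserves_cut_edges[OF assms(1)])

lemma cut_edge_square_towards_base:
  assumes ab: "adj a b" and xy: "adj x y" "x \<in> W a b" "y \<in> W b a" and j: "d a x = Suc j"
  obtains w m where "adj w m" "w \<in> W a b" "m \<in> W b a" "d a w = j"
    "({w, m}, {x, y}) \<in> theta0 adj"
proof -
  have V: "a \<in> V" "b \<in> V" "x \<in> V" "y \<in> V"
    using ab xy adj_in_V by auto
  have "d b x = Suc (d a x)" "d a y = Suc (d b y)"
    using gdist_W_Suc ab adj_sym xy by blast+
  moreover have "d a y \<le> Suc (d a x)" "d b x \<le> Suc (d b y)"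
    using gdist_adj_le xy adj_sym V gdist_sym by metis+
  ultimately have dy: "d b y = Suc j"
    using j by linarith
  obtain w where w: "adj x w" "d w a = j"
    using gdist_Suc_imp_neighbour[OF V(3,1)] j gdist_sym by metis
  have "w \<in> I x a"
    using w gdist_adj j gdist_sym[of x a] adj_in_V in_interval_iff by simp
  then have wW: "w \<in> W a b"
    using interval_to_base_subset_W ab xy(2) by blast
  then have "d b w = Suc j" "w \<noteq> y"
    using gdist_W_Suc[OF ab] w(2) gdist_sym W_swap_disjoint xy(3) by metis+
  then obtain m where m: "adj w m" "adj y m" "Suc (d b m) = d b w"
    using quadrangle[OF V(2) _ adj_sym[OF w(1)] adj_sym[OF xy(1)]] dy by metis
  have "d a y \<le> Suc (d a m)"
    using gdist_adj_le m V gdist_sym by metis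
  then have mW: "m \<in> W b a"
    using in_W_or_W_swap[OF ab] m adj_in_V dy \<open>d b w = Suc j\<close> \<open>d a y = Suc (d b y)\<close>
    unfolding W_def by fastforce
  have "({w, m}, {x, y}) \<in> theta0 adj"
    unfolding theta0_def using m adj_sym xy(1) w(1) \<open>w \<noteq> y\<close> mW xy(2) W_swap_disjoint by blast
  then show thesis
    using that m(1) wW mW w(2) gdist_sym by metis
qed

lemma cut_edges_subset_theta:
  "adj a b \<Longrightarrow> adj x y \<Longrightarrow> x \<in> W a b \<Longrightarrow> y \<in> W b a \<Longrightarrow> ({a, b}, {x, y}) \<in> theta adj"
proof (induction "d a x" arbitrary: x y)
  case 0
  have V: "a \<in> V" "b \<in> V" "x \<in> V" "y \<in> V"
    using 0 adj_in_V by auto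
  then have "x = a"
    using 0 gdist_eq_0_imp_eq by metis
  moreover have "d a y = Suc (d b y)" "d a y \<le> Suc (d a x)"
    using gdist_W_Suc adj_sym 0 gdist_adj_le V gdist_sym by metis+
  then have "d b y = 0"
    using 0(1) by linarith
  then have "y = b"
    using gdist_eq_0_imp_eq V by blast
  ultimately show ?case
    unfolding theta_def by simp
next
  case (Suc j)
  then obtain w m where "adj w m" "w \<in> W a b" "m \<in> W b a" "d a w = j"
    and sq: "({w, m}, {x, y}) \<in> theta0 adj"
    using cut_edge_square_towards_base by metis
  then have "({a, b}, {w, m}) \<in> theta adj"
    using Suc by blast
  then show ?case
    using sq unfolding theta_def by (rule rtrancl_into_rtrancl)
qed

lemma theta_class_eq_cut_edges: "adj a b \<Longrightarrow> theta adj `` {{a, b}} = cut_edges a b"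
  using theta_preserves_cut_edges cut_edgesI in_W_self adj_sym cut_edges_subset_theta
  by (fastforce elim: cut_edgesE)

lemma theta_classes_eq_cut_edges: "theta_classes adj = {cut_edges a b | a b. adj a b}"
  unfolding theta_classes_def quotient_def edges_def using theta_class_eq_cut_edges by blast


abbreviation G_minus_cut :: "'a \<Rightarrow> 'a \<Rightarrow> 'a \<Rightarrow> 'a \<Rightarrow> bool" where
  "G_minus_cut a b \<equiv> del_edges adj (cut_edges a b)"

lemma G_minus_cut_path_stays_in_W:
  assumes ab: "adj a b" and "(G_minus_cut a b)\<^sup>*\<^sup>* x y" "x \<in> W a b"
  shows "y \<in> W a b"
  using assms(2,3)
proof induction
  case (step y z)
  then have "adj y z" "{y, z} \<notin> cut_edges a b"
    unfolding del_edges_def by auto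
  then show ?case
    using in_W_or_W_swap[OF ab] adj_in_V cut_edgesI step.IH step.prems by blast
qed simp

lemma G_minus_cut_path_from_base:
  assumes ab: "adj a b" and "y \<in> W a b"
  shows "(G_minus_cut a b)\<^sup>*\<^sup>* a y"
  using assms(2)
proof (induction "d y a" arbitrary: y)
  case 0
  then have "y = a"
    using gdist_eq_0_imp_eq W_in_V adj_in_V ab by metis
  then show ?case
    by simp
next
  case (Suc j)
  have V: "a \<in> V" "y \<in> V"
    using ab adj_in_V Suc.prems W_in_V by auto
  obtain w where w: "adj y w" "d w a = j"
    using gdist_Suc_imp_neighbour[OF V(2,1)] Suc.hyps(2) by metis
  have "w \<in> I y a"
    using w gdist_adj Suc.hyps(2) adj_in_V in_interval_iff by simp
  then have wW: "w \<in> W a b"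
    using interval_to_base_subset_W ab Suc.prems by blast
  have "{w, y} \<notin> cut_edges a b"
    using cut_edge_sides wW Suc.prems W_swap_disjoint by blast
  then have "G_minus_cut a b w y"
    unfolding del_edges_def using w adj_sym by blast
  moreover have "(G_minus_cut a b)\<^sup>*\<^sup>* a w"
    using Suc.hyps(1) w(2) wW by metis
  ultimately show ?case
    by (meson rtranclp.rtrancl_into_rtrancl)
qed

lemma component_G_minus_cut:
  assumes ab: "adj a b" and x: "x \<in> W a b"
  shows "component V (G_minus_cut a b) x = W a b"
proof -
  have "symp (G_minus_cut a b)"
    unfolding symp_def del_edges_def using adj_sym by (metis insert_commute)
  then have "(G_minus_cut a b)\<^sup>*\<^sup>* x a"
    using G_minus_cut_path_from_base[OF ab x] by (meson symp_rtranclp sympD)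
  then have "(G_minus_cut a b)\<^sup>*\<^sup>* x y" if "y \<in> W a b" for y
    using G_minus_cut_path_from_base[OF ab that] by (rule rtranclp_trans)
  then show ?thesis
    unfolding component_def using G_minus_cut_path_stays_in_W[OF ab _ x] W_in_V by blast
qed

lemma halfspaces_cut_edges:
  assumes ab: "adj a b"
  shows "halfspaces V adj (cut_edges a b) = {W a b, W b a}"
proof -
  have swap: "x \<in> W b a \<Longrightarrow> component V (G_minus_cut a b) x = W b a" for x
    using component_G_minus_cut[OF adj_sym[OF ab]] cut_edges_swap by simp
  then have "component V (G_minus_cut a b) x \<in> {W a b, W b a}" if "x \<in> V" for x
    using in_W_or_W_swap[OF ab that] component_G_minus_cut[OF ab] by blast
  moreover have "component V (G_minus_cut a b) a = W a b" "component V (G_minus_cut a b) b = W b a"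
    using component_G_minus_cut[OF ab in_W_self[OF ab]] swap[OF in_W_self[OF adj_sym[OF ab]]]
    by blast+
  ultimately show ?thesis
    unfolding halfspaces_def components_def using ab adj_in_V by blast
qed

lemma in_majority_halfspace_cut_edges_iff:
  assumes "adj a b" "v \<in> W a b"
  shows "in_majority_halfspace V adj (cut_edges a b) v \<longleftrightarrow> card (W b a) < card (W a b)"
  unfolding in_majority_halfspace_def halfspaces_cut_edges[OF assms(1)]
    component_G_minus_cut[OF assms] using W_neq_W_swap[OF assms(1)] by auto

lemma separating_edge:
  assumes "u \<in> V" "v \<in> V" "u \<noteq> v"
  obtains b where "adj u b" "v \<in> W b u"
proof -
  obtain j where j: "d u v = Suc j"
    using assms gdist_eq_0_imp_eq not0_implies_Suc by metis
  then obtain b where "adj u b" "d b v = j"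
    using gdist_Suc_imp_neighbour assms(1,2) by metis
  then show thesis
    using that j assms(2) gdist_sym unfolding W_def by simp
qed


definition gconvex :: "'a set \<Rightarrow> bool" where
  "gconvex A \<longleftrightarrow> A \<subseteq> V \<and> (\<forall>x\<in>A. \<forall>y\<in>A. I x y \<subseteq> A)"

lemma gconvex_V: "gconvex V"
  unfolding gconvex_def interval_def by blast

lemma gconvex_W: "adj a b \<Longrightarrow> gconvex (W a b)"
  unfolding gconvex_def using W_convex W_in_V by blast

lemma gconvex_Int: "gconvex A \<Longrightarrow> gconvex B \<Longrightarrow> gconvex (A \<inter> B)"
  unfolding gconvex_def by blast

lemma helly3:
  assumes "gconvex A" "gconvex B" "gconvex C"
    and "A \<inter> B \<noteq> {}" "B \<inter> C \<noteq> {}" "A \<inter> C \<noteq> {}"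
  shows "A \<inter> B \<inter> C \<noteq> {}"
proof -
  obtain x y z where xyz: "x \<in> B \<inter> C" "y \<in> A \<inter> C" "z \<in> A \<inter> B"
    using assms(4-6) by blast
  then have "x \<in> V" "y \<in> V" "z \<in> V"
    using assms(1,2) unfolding gconvex_def by blast+
  then have "median_of x y z \<in> I x y \<inter> I y z \<inter> I z x"
    by (rule median_of_in_intervals)
  then have "median_of x y z \<in> A \<inter> B \<inter> C"
    using xyz assms(1-3) unfolding gconvex_def by blast
  then show ?thesis
    by blast
qed

lemma helly:
  assumes "finite \<F>" "\<forall>A\<in>\<F>. gconvex A" "\<forall>A\<in>\<F>. \<forall>B\<in>\<F>. A \<inter> B \<noteq> {}"
  shows "\<Inter>\<F> \<noteq> {}"
  using assms
proof (induction "card \<F>" arbitrary: \<F> rule: less_induct)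
  case less
  show ?case
  proof (cases "\<exists>A\<in>\<F>. \<exists>A'\<in>\<F>. A' \<noteq> A")
    case False
    then have "\<F> = {} \<or> (\<exists>A. \<F> = {A})"
      by blast
    then show ?thesis
      using less.prems(3) by auto
  next
    case True
    then obtain A A' where A: "A \<in> \<F>" "A' \<in> \<F>" "A' \<noteq> A"
      by blast
    define \<F>' where "\<F>' = (\<lambda>B. B \<inter> A) ` (\<F> - {A})"
    have "card \<F>' < card \<F>"
      unfolding \<F>'_def using card_image_le less.prems(1) card_Diff1_less A(1)
      by (metis finite_Diff le_less_trans)
    moreover have "\<forall>B\<in>\<F>'. gconvex B"
      unfolding \<F>'_def using less.prems(2) A gconvex_Int by blast
    moreover have "\<forall>B\<in>\<F>'. \<forall>B'\<in>\<F>'. B \<inter> B' \<noteq> {}"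
      unfolding \<F>'_def using helly3 less.prems(2,3) A(1) by (auto simp: Int_ac)
    ultimately have "\<Inter>\<F>' \<noteq> {}"
      using less.hyps less.prems(1) unfolding \<F>'_def by blast
    moreover have "\<Inter>\<F>' = \<Inter>\<F>"
      unfolding \<F>'_def using A by blast
    ultimately show ?thesis
      by simp
  qed
qed


lemma theta_class_majority_side:
  assumes "C \<in> theta_classes adj" "2 * Min (card ` halfspaces V adj C) < card V"
  obtains a b where "adj a b" "C = cut_edges a b" "card V < 2 * card (W a b)"
proof -
  obtain a b where ab: "adj a b" "C = cut_edges a b"
    using assms(1) theta_classes_eq_cut_edges by blast
  then have "card V < 2 * card (W a b) \<or> card V < 2 * card (W b a)"
    using assms(2) halfspaces_cut_edges[OF ab(1)] card_W_add_card_W_swap[OF ab(1)]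
    by (auto simp: min_def split: if_splits)
  then show thesis
    using that ab cut_edges_swap adj_sym by metis
qed

lemma in_all_majority_halfspaces_unique:
  assumes u: "u \<in> V" "\<forall>C\<in>theta_classes adj. in_majority_halfspace V adj C u"
    and v: "v \<in> V" "\<forall>C\<in>theta_classes adj. in_majority_halfspace V adj C v"
  shows "u = v"
proof (rule ccontr)
  assume "u \<noteq> v"
  then obtain b where b: "adj u b" "v \<in> W b u"
    using separating_edge u(1) v(1) by blast
  then have "cut_edges u b \<in> theta_classes adj"
    using theta_classes_eq_cut_edges by blast
  then show False
    using u(2) v(2) in_majority_halfspace_cut_edges_iff[OF b(1) in_W_self[OF b(1)]]
      in_majority_halfspace_cut_edges_iff[OF adj_sym[OF b(1)] b(2)] cut_edges_swap by auto
qed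

lemma in_all_majority_halfspaces_exists:
  assumes unbalanced: "\<forall>C\<in>theta_classes adj. 2 * Min (card ` halfspaces V adj C) < card V"
  obtains v0 where "v0 \<in> V" "\<forall>C\<in>theta_classes adj. in_majority_halfspace V adj C v0"
proof -
  define \<M> where "\<M> = {W a b | a b. adj a b \<and> card V < 2 * card (W a b)}"
  have majority: "A \<subseteq> V \<and> card V < 2 * card A" if "A \<in> insert V \<M>" for A
    using that finite_V V_nonempty unfolding \<M>_def by (auto simp: card_gt_0_iff intro: W_in_V)
  then have "finite (insert V \<M>)"
    using finite_V by (meson Pow_iff finite_Pow_iff finite_subset subsetI)
  moreover have "\<forall>A\<in>insert V \<M>. gconvex A"
    unfolding \<M>_def using gconvex_V gconvex_W by blast
  moreover have "\<forall>A\<in>insert V \<M>. \<forall>B\<in>insert V \<M>. A \<inter> B \<noteq> {}"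
    using majorities_intersect finite_V majority by blast
  ultimately have "\<Inter>(insert V \<M>) \<noteq> {}"
    by (rule helly)
  then obtain v0 where v0: "v0 \<in> V" "\<forall>H\<in>\<M>. v0 \<in> H"
    by blast
  have "in_majority_halfspace V adj C v0" if C: "C \<in> theta_classes adj" for C
  proof -
    obtain a b where ab: "adj a b" "C = cut_edges a b" "card V < 2 * card (W a b)"
      using theta_class_majority_side[OF C] unbalanced C by blast
    then have "v0 \<in> W a b"
      using v0(2) unfolding \<M>_def by blast
    then show ?thesis
      using in_majority_halfspace_cut_edges_iff ab card_W_add_card_W_swap[OF ab(1)] by auto
  qed
  then show thesis
    using that v0(1) by blast
qed

end


theorem mainTheorem5:
  fixes f :: "nat \<Rightarrow> nat" and V :: "'a set" and adj :: "'a \<Rightarrow> 'a \<Rightarrow> bool"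
  assumes "\<forall>k>0. f k > 0"
    and "in_U f V adj"
    and "f (card V) \<ge> 2"
  shows "\<exists>!v0. v0 \<in> V \<and> (\<forall>C\<in>theta_classes adj. in_majority_halfspace V adj C v0)"
proof -
  interpret median V adj
    using assms(2) by unfold_locales (simp add: in_U_def)
  have "\<forall>C\<in>theta_classes adj. 2 * Min (card ` halfspaces V adj C) < card V"
    using assms(2,3) unbalanced_imp_minority unfolding in_U_def f_balanced_def by blast
  then obtain v0 where "v0 \<in> V" "\<forall>C\<in>theta_classes adj. in_majority_halfspace V adj C v0"
    by (rule in_all_majority_halfspaces_exists)
  then show ?thesis
    using in_all_majority_halfspaces_unique by blast
qed

end
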